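(* Assume Case (I) or Case (II) holds. Let $\mathbf y^\sharp$ be any solution of $\mathbf z=\mathbf H\mathbf y$, let $r>0$, and let $\mathcal M^\sharp(r)=\{\mathbf w\in\mathbb R^m:\|\mathbf w-\mathbf y^\sharp\|\le r\}$. Then, for any graph signal and weights satisfying the Weights Assumption and any $K>0$: (i) $(\mathcal M^\sharp(r))^N=\mathcal M^\sharp(r)\times\cdots\times\mathcal M^\sharp(r)$ is a positively invariant set for the "consensus + projection" flow; (ii) $(\mathcal M^\sharp(r))^N\cap(\mathcal A_1\times\cdots\times\mathcal A_N)$ is a positively invariant set for the "projection consensus" flow.
   Context: Setting: $N,m\ge 1$; $\mathbf H\in\mathbb R^{N\times m}$ has rows $\mathbf h_1^{T},\dots,\mathbf h_N^{T}$ with $\|\mathbf h_i\|=1$ for all $i$; $\mathbf z=(z_1,\dots,z_N)^T\in\mathbb R^N$; the equation is $\mathbf z=\mathbf H\mathbf y$. Let $\mathcal A_i=\{\mathbf y\in\mathbb R^m:\mathbf h_i^T\mathbf y=z_i\}$ with Euclidean projection $\mathcal P_{\mathcal A_i}(\mathbf y)=(I-\mathbf h_i\mathbf h_i^T)\mathbf y+z_i\mathbf h_i$. Case (I): $\mathrm{rank}(\mathbf H)=m$ and $\mathbf z$ in the column space of $\mathbf H$. Case (II): $\mathrm{rank}(\mathbf H)<m$ and $\mathbf z$ in the column space of $\mathbf H$. Network: $\mathrm V=\{1,\dots,N\}$; a graph signal assigns to each $t\ge0$ a digraph $\mathrm G_{\sigma(t)}=(\mathrm V,\mathrm E_{\sigma(t)})$,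 $\mathrm N_i(t)=\{j:(j,i)\in\mathrm E_{\sigma(t)}\}$; Weights Assumption: $a_{ij}:[0,\infty)\to(0,\infty)$ continuous except on a Lebesgue-null set and bounded by some $a^\ast>0$. Flows: "consensus + projection": $\dot{\mathbf x}_i=K\sum_{j\in\mathrm N_i(t)}a_{ij}(t)(\mathbf x_j-\mathbf x_i)+\mathcal P_{\mathcal A_i}(\mathbf x_i)-\mathbf x_i$; "projection consensus": $\dot{\mathbf x}_i=\sum_{j\in\mathrm N_i(t)}a_{ij}(t)\big(\mathcal P_{\mathcal A_i}(\mathbf x_j)-\mathcal P_{\mathcal A_i}(\mathbf x_i)\big)$, $i\in\mathrm V$. A set $\Omega\subset(\mathbb R^m)^N$ is positively invariant if every trajectory with $\mathbf x(t_0)\in\Omega$ satisfies $\mathbf x(t)\in\Omega$ for all $t\ge t_0$. *)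

theory Defs
  imports "HOL-Analysis.Analysis"
begin

text \<open>Nodes are indexed by a finite type 'n (N = CARD('n)), the state space
R^m is real^'m. Row i of H is H $ i, so h_i = H $ i.\<close>

definition projA :: "real^'m^'n \<Rightarrow> real^'n \<Rightarrow> 'n \<Rightarrow> real^'m \<Rightarrow> real^'m" where
  "projA H z i y = (y - (H $ i \<bullet> y) *\<^sub>R (H $ i)) + (z $ i) *\<^sub>R (H $ i)"

definition affA :: "real^'m^'n \<Rightarrow> real^'n \<Rightarrow> 'n \<Rightarrow> (real^'m) set" where
  "affA H z i = {y. H $ i \<bullet> y = z $ i}"

definition nbrs :: "(real \<Rightarrow> ('n \<times> 'n) set) \<Rightarrow> real \<Rightarrow> 'n \<Rightarrow> 'n set" where
  "nbrs E t i = {j. (j, i) \<in> E t}"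

definition weights_ok :: "('n \<Rightarrow> 'n \<Rightarrow> real \<Rightarrow> real) \<Rightarrow> bool" where
  "weights_ok a \<longleftrightarrow> (\<exists>astar>0. \<forall>i j.
      (\<forall>t\<ge>0. 0 < a i j t \<and> a i j t \<le> astar) \<and>
      (\<exists>S. S \<in> null_sets lborel \<and>
           (\<forall>t\<in>{0..} - S. continuous (at t within {0..}) (a i j))))"

definition cp_rhs :: "real \<Rightarrow> (real \<Rightarrow> ('n \<times> 'n) set) \<Rightarrow> ('n \<Rightarrow> 'n \<Rightarrow> real \<Rightarrow> real)
    \<Rightarrow> real^'m^'n \<Rightarrow> real^'n \<Rightarrow> real \<Rightarrow> real^'m^'n \<Rightarrow> real^'m^'n" where
  "cp_rhs K E a H z t x = (\<chi> i. K *\<^sub>R (\<Sum>j\<in>nbrs E t i. a i j t *\<^sub>R (x $ j - x $ i))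
                                + projA H z i (x $ i) - x $ i)"

definition pc_rhs :: "(real \<Rightarrow> ('n \<times> 'n) set) \<Rightarrow> ('n \<Rightarrow> 'n \<Rightarrow> real \<Rightarrow> real)
    \<Rightarrow> real^'m^'n \<Rightarrow> real^'n \<Rightarrow> real \<Rightarrow> real^'m^'n \<Rightarrow> real^'m^'n" where
  "pc_rhs E a H z t x = (\<chi> i. \<Sum>j\<in>nbrs E t i. a i j t *\<^sub>R (projA H z i (x $ j) - projA H z i (x $ i)))"

text \<open>A (Caratheodory) trajectory of dx/dt = F t x on [t0, infinity):
  x is the indefinite integral of t \<mapsto> F t (x t), i.e. absolutely continuous
  and satisfying the ODE almost everywhere.\<close>
definition is_traj :: "(real \<Rightarrow> 'v::euclidean_space \<Rightarrow> 'v) \<Rightarrow> real \<Rightarrow> (real \<Rightarrow> 'v) \<Rightarrow> bool" where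
  "is_traj F t0 x \<longleftrightarrow> (\<forall>t\<ge>t0. (\<lambda>s. F s (x s)) integrable_on {t0..t} \<and>
                         x t = x t0 + integral {t0..t} (\<lambda>s. F s (x s)))"

definition pos_invariant :: "(real \<Rightarrow> 'v::euclidean_space \<Rightarrow> 'v) \<Rightarrow> 'v set \<Rightarrow> bool" where
  "pos_invariant F \<Omega> \<longleftrightarrow> (\<forall>x t0. 0 \<le> t0 \<longrightarrow> is_traj F t0 x \<longrightarrow> x t0 \<in> \<Omega> \<longrightarrow> (\<forall>t\<ge>t0. x t \<in> \<Omega>))"

end

theory Submission
  imports Defs
begin

text \<open>Both vector fields vanish at the constant state with all components equal to \<open>y\<^sup>\<sharp>\<close>, are
  Lipschitz in the state uniformly in time for the maximum over the nodes of the Euclidean norms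
  (the weights are bounded), and a short explicit Euler step \<open>x + h F(t, x)\<close> maps every product
  of closed balls around \<open>y\<^sup>\<sharp>\<close> into itself: its \<open>i\<close>-th component minus \<open>y\<^sup>\<sharp>\<close> is a convex
  combination of the vectors \<open>x\<^sub>j - y\<^sup>\<sharp>\<close> and \<open>P\<^sub>i x\<^sub>j - P\<^sub>i y\<^sup>\<sharp>\<close>, all of norm at most
  the radius, because the projection \<open>P\<^sub>i\<close> is nonexpansive and fixes \<open>y\<^sup>\<sharp>\<close>.
  On a time interval of length \<open>h\<close> a Caratheodory trajectory differs from the Euler step by
  \<open>O(h\<^sup>2)\<close>, so the largest distance of a node from \<open>y\<^sup>\<sharp>\<close> grows by at most \<open>M h\<^sup>2\<close> per
  step; splitting \<open>[t\<^sub>0, T]\<close> into \<open>n\<close> equal steps and letting \<open>n \<rightarrow> \<infinity>\<close> shows that it does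
  not grow at all. For the projection consensus flow the Euler estimate uses \<open>P\<^sub>i x\<^sub>i = x\<^sub>i\<close>, so
  it is combined with the invariance of the hyperplanes \<open>\<A>\<^sub>i\<close>, which holds because \<open>h\<^sub>i\<close> is
  orthogonal to the \<open>i\<close>-th component of the vector field.\<close>

text \<open>\<open>block_cball c r\<close> is the set \<open>(\<M>\<^sup>\<sharp>(r))\<^sup>N\<close> of the paper (with \<open>c = y\<^sup>\<sharp>\<close>); with \<open>c = 0\<close>
  it is the ball of the norm \<open>max\<^sub>j \<parallel>v\<^sub>j\<parallel>\<close> in which the Lipschitz estimates are stated.\<close>

definition block_cball :: "'v::real_normed_vector \<Rightarrow> real \<Rightarrow> ('v^'n) set" where
  "block_cball c r = {v. \<forall>j. norm (v $ j - c) \<le> r}"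

section \<open>Caratheodory trajectories\<close>

lemma is_trajD:
  assumes "is_traj F t0 x" "t0 \<le> t"
  shows "(\<lambda>\<sigma>. F \<sigma> (x \<sigma>)) integrable_on {t0..t}"
    and "x t = x t0 + integral {t0..t} (\<lambda>\<sigma>. F \<sigma> (x \<sigma>))"
  using assms(1)[unfolded is_traj_def, rule_format, OF assms(2)] by blast+

lemma is_traj_has_integral:
  assumes traj: "is_traj F t0 x" and "t0 \<le> s" "s \<le> t"
  shows "((\<lambda>\<sigma>. F \<sigma> (x \<sigma>)) has_integral (x t - x s)) {s..t}"
proof -
  let ?f = "\<lambda>\<sigma>. F \<sigma> (x \<sigma>)"
  have int: "?f integrable_on {t0..t}"
    using is_trajD(1)[OF traj] \<open>t0 \<le> s\<close> \<open>s \<le> t\<close> by simp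
  have combine: "integral {t0..s} ?f + integral {s..t} ?f = integral {t0..t} ?f"
    using \<open>t0 \<le> s\<close> \<open>s \<le> t\<close> int by (rule Henstock_Kurzweil_Integration.integral_combine)
  have "x t - x s = integral {t0..t} ?f - integral {t0..s} ?f"
    using is_trajD(2)[OF traj, of s] is_trajD(2)[OF traj, of t] \<open>t0 \<le> s\<close> \<open>s \<le> t\<close> by simp
  also have "\<dots> = integral {s..t} ?f"
    unfolding combine[symmetric] by simp
  finally show ?thesis
    using integrable_integral[OF integrable_subinterval_real[OF int]] \<open>t0 \<le> s\<close> by simp
qed

lemma is_traj_continuous_on:
  assumes traj: "is_traj F t0 x"
  shows "continuous_on {t0..T} x"
proof -
  have "continuous_on {t0..T} (\<lambda>t. x t0 + integral {t0..t} (\<lambda>\<sigma>. F \<sigma> (x \<sigma>)))"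
    by (cases "t0 \<le> T")
      (auto intro!: continuous_intros indefinite_integral_continuous_1 is_trajD(1)[OF traj])
  then show ?thesis
    by (rule continuous_on_eq) (metis atLeastAtMost_iff is_trajD(2)[OF traj])
qed

lemma is_traj_linear_increment_le:
  assumes traj: "is_traj F t0 x" and lin: "bounded_linear lin" and "t0 \<le> s" "s \<le> t"
    and bound: "\<And>\<sigma>. \<sigma> \<in> {s..t} \<Longrightarrow> norm (lin (F \<sigma> (x \<sigma>))) \<le> C"
  shows "norm (lin (x t) - lin (x s)) \<le> C * (t - s)"
proof -
  have integral: "((\<lambda>\<sigma>. lin (F \<sigma> (x \<sigma>))) has_integral lin (x t - x s)) {s..t}"
    using has_integral_linear[OF is_traj_has_integral[OF traj \<open>t0 \<le> s\<close> \<open>s \<le> t\<close>] lin]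
    by (simp add: o_def)
  have "0 \<le> C"
    using bound[of s] \<open>s \<le> t\<close> by (meson atLeastAtMost_iff norm_ge_zero order_refl order_trans)
  from has_integral_bound_real[where S="{}", OF this finite.emptyI integral] bound \<open>s \<le> t\<close>
  show ?thesis
    by (simp add: linear_diff[OF bounded_linear.linear[OF lin]])
qed

section \<open>Invariance of products of balls\<close>

lemma le_of_quadratic_increments:
  fixes \<phi> :: "real \<Rightarrow> real"
  assumes incr: "\<And>s t. t0 \<le> s \<Longrightarrow> s \<le> t \<Longrightarrow> t \<le> T \<Longrightarrow> t - s \<le> \<delta> \<Longrightarrow> \<phi> t \<le> \<phi> s + M * (t - s)\<^sup>2"
    and "0 < \<delta>" "t0 \<le> T"
  shows "\<phi> T \<le> \<phi> t0"
proof -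
  have uniform_steps: "\<phi> T \<le> \<phi> t0 + M * (T - t0)\<^sup>2 / real n"
    if n: "0 < n" "T - t0 \<le> real n * \<delta>" for n :: nat
  proof -
    define h where "h = (T - t0) / real n"
    have h: "0 \<le> h" "h \<le> \<delta>" "t0 + real n * h = T"
      using n assms(3) by (auto simp: h_def field_simps)
    have "k \<le> n \<Longrightarrow> \<phi> (t0 + real k * h) \<le> \<phi> t0 + real k * (M * h\<^sup>2)" for k
    proof (induction k)
      case (Suc k)
      have "real (Suc k) * h \<le> real n * h"
        using Suc.prems h(1) by (intro mult_right_mono) auto
      then have "\<phi> (t0 + real (Suc k) * h) \<le> \<phi> (t0 + real k * h) + M * h\<^sup>2"
        using incr[of "t0 + real k * h" "t0 + real (Suc k) * h"] h by (simp add: algebra_simps)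
      with Suc show ?case by (simp add: algebra_simps)
    qed simp
    from this[of n] have "\<phi> T \<le> \<phi> t0 + real n * (M * h\<^sup>2)"
      by (simp add: h(3))
    also have "\<dots> = \<phi> t0 + M * (T - t0)\<^sup>2 / real n"
      using n(1) by (simp add: h_def power2_eq_square field_simps)
    finally show ?thesis .
  qed
  obtain N :: nat where N: "(T - t0) / \<delta> \<le> real N"
    using real_arch_simple by blast
  have "\<forall>n\<ge>Suc N. \<phi> T \<le> \<phi> t0 + M * (T - t0)\<^sup>2 / real n"
  proof (intro allI impI uniform_steps)
    fix n assume "Suc N \<le> n"
    with N have "(T - t0) / \<delta> \<le> real n" by linarith
    with \<open>0 < \<delta>\<close> show "T - t0 \<le> real n * \<delta>" by (simp add: field_simps)
  qed simp
  moreover have "(\<lambda>n. \<phi> t0 + M * (T - t0)\<^sup>2 / real n) \<longlonglongrightarrow> \<phi> t0"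
    using tendsto_add[OF tendsto_const lim_const_over_n] by simp
  ultimately show ?thesis
    by (intro LIMSEQ_le_const) auto
qed

lemma is_traj_block_cball_step:
  fixes F :: "real \<Rightarrow> 'v::euclidean_space^'n \<Rightarrow> 'v^'n"
  assumes traj: "is_traj F t0 x" and stays: "\<And>t. t0 \<le> t \<Longrightarrow> x t \<in> P"
    and euler: "\<And>\<tau> v h \<rho>. t0 \<le> \<tau> \<Longrightarrow> v \<in> P \<inter> block_cball c \<rho> \<Longrightarrow> 0 \<le> h \<Longrightarrow> h \<le> \<delta> \<Longrightarrow>
        v + h *\<^sub>R F \<tau> v \<in> block_cball c \<rho>"
    and lipschitz: "\<And>\<tau> v w \<mu>. t0 \<le> \<tau> \<Longrightarrow> v - w \<in> block_cball 0 \<mu> \<Longrightarrow>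
        F \<tau> v - F \<tau> w \<in> block_cball 0 (L * \<mu>)"
    and st: "t0 \<le> s" "s \<le> t" "t - s \<le> \<delta>"
    and start: "x s \<in> block_cball c \<rho>"
    and drift: "\<And>\<sigma>. \<sigma> \<in> {s..t} \<Longrightarrow> x \<sigma> - x s \<in> block_cball 0 (C * (t - s))"
  shows "x t \<in> block_cball c (\<rho> + L * C * (t - s)\<^sup>2)"
  unfolding block_cball_def
proof (intro CollectI allI)
  fix i
  define h where "h = t - s"
  \<comment> \<open>\<open>h (x\<^sub>i(t) - c)\<close> is the integral of \<open>g\<close> over \<open>[s, t]\<close>, and \<open>g\<close> is the Euler step from \<open>x(s)\<close>
    up to the Lipschitz error\<close>
  define g where "g \<sigma> = (x s $ i - c) + h *\<^sub>R F \<sigma> (x \<sigma>) $ i" for \<sigma>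
  have g_bound: "norm (g \<sigma>) \<le> \<rho> + L * C * h\<^sup>2" if \<sigma>: "\<sigma> \<in> {s..t}" for \<sigma>
  proof -
    have "g \<sigma> = ((x s + h *\<^sub>R F \<sigma> (x s)) $ i - c) + h *\<^sub>R (F \<sigma> (x \<sigma>) - F \<sigma> (x s)) $ i"
      by (simp add: g_def algebra_simps)
    moreover have "norm ((x s + h *\<^sub>R F \<sigma> (x s)) $ i - c) \<le> \<rho>"
      using euler[of \<sigma> "x s" \<rho> h] stays[of s] start st \<sigma> unfolding block_cball_def h_def by auto
    moreover have "norm ((F \<sigma> (x \<sigma>) - F \<sigma> (x s)) $ i) \<le> L * (C * h)"
      using lipschitz[OF _ drift[OF \<sigma>]] st \<sigma> unfolding block_cball_def h_def by auto
    moreover have "0 \<le> h"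
      using st by (simp add: h_def)
    ultimately have "norm (g \<sigma>) \<le> \<rho> + h * (L * (C * h))"
      by (metis norm_triangle_le norm_scaleR abs_of_nonneg add_mono mult_left_mono)
    then show ?thesis
      by (simp add: power2_eq_square algebra_simps)
  qed
  have "((\<lambda>\<sigma>. F \<sigma> (x \<sigma>) $ i) has_integral (x t $ i - x s $ i)) {s..t}"
    using has_integral_linear[OF is_traj_has_integral[OF traj st(1,2)] bounded_linear_vec_nth]
    by (simp add: o_def)
  moreover have "((\<lambda>\<sigma>. x s $ i - c) has_integral h *\<^sub>R (x s $ i - c)) {s..t}"
    using has_integral_const_real[of "x s $ i - c" s t] st(2) by (simp add: h_def)
  ultimately have "(g has_integral h *\<^sub>R (x s $ i - c) + h *\<^sub>R (x t $ i - x s $ i)) {s..t}"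
    unfolding g_def by (intro has_integral_add has_integral_cmul)
  then have g_integral: "(g has_integral h *\<^sub>R (x t $ i - c)) {s..t}"
    by (simp add: algebra_simps)
  have "0 \<le> \<rho> + L * C * h\<^sup>2"
    using g_bound[of s] st(2) by (meson atLeastAtMost_iff norm_ge_zero order_refl order_trans)
  from has_integral_bound_real[where S="{}", OF this finite.emptyI g_integral] g_bound
  have "norm (h *\<^sub>R (x t $ i - c)) \<le> (\<rho> + L * C * h\<^sup>2) * h"
    using st(2) by (simp add: h_def)
  then show "norm (x t $ i - c) \<le> \<rho> + L * C * (t - s)\<^sup>2"
    using start st(2) unfolding h_def block_cball_def
    by (cases "s = t") (auto simp: mult_le_cancel_right_pos)
qed

lemma in_block_cball_iff_Max_le:
  "v \<in> block_cball c r \<longleftrightarrow> (MAX j. norm (v $ j - c)) \<le> r"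
  unfolding block_cball_def by simp

lemma is_traj_block_lipschitz_in_time:
  fixes F :: "real \<Rightarrow> 'v::euclidean_space^'n \<Rightarrow> 'v^'n"
  assumes traj: "is_traj F t0 x"
    and lipschitz: "\<And>\<tau> v w \<mu>. t0 \<le> \<tau> \<Longrightarrow> v - w \<in> block_cball 0 \<mu> \<Longrightarrow>
        F \<tau> v - F \<tau> w \<in> block_cball 0 (L * \<mu>)"
    and equilibrium: "\<And>\<tau>. t0 \<le> \<tau> \<Longrightarrow> F \<tau> (\<chi> j. c) = 0"
    and "t0 \<le> T"
  obtains C where "\<And>s t \<sigma>. t0 \<le> s \<Longrightarrow> \<sigma> \<in> {s..t} \<Longrightarrow> t \<le> T \<Longrightarrow>
    x \<sigma> - x s \<in> block_cball 0 (C * (t - s))"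
proof -
  obtain B where B: "\<And>\<sigma>. \<sigma> \<in> {t0..T} \<Longrightarrow> x \<sigma> - (\<chi> j. c) \<in> block_cball 0 B"
  proof -
    have "compact ((\<lambda>\<sigma>. x \<sigma> - (\<chi> j. c)) ` {t0..T})"
      using is_traj_continuous_on[OF traj]
      by (intro compact_continuous_image continuous_intros) auto
    then obtain B where B: "\<And>\<sigma>. \<sigma> \<in> {t0..T} \<Longrightarrow> norm (x \<sigma> - (\<chi> j. c)) \<le> B"
      by (meson compact_imp_bounded bounded_iff imageI)
    have "norm (x \<sigma> $ j - c) \<le> B" if "\<sigma> \<in> {t0..T}" for \<sigma> j
      using Finite_Cartesian_Product.norm_nth_le[of "x \<sigma> - (\<chi> j. c)" j] B[OF that] by simp
    then show thesis
      by (intro that[of B]) (simp add: block_cball_def)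
  qed
  have rhs_bound: "norm (F \<sigma> (x \<sigma>) $ j) \<le> L * B" if "\<sigma> \<in> {t0..T}" for \<sigma> j
    using lipschitz[OF _ B[OF that]] equilibrium that by (auto simp: block_cball_def)
  have "0 \<le> L * B"
    using rhs_bound[of t0] \<open>t0 \<le> T\<close> by (meson atLeastAtMost_iff norm_ge_zero order_refl order_trans)
  have "x \<sigma> - x s \<in> block_cball 0 (L * B * (t - s))"
    if "t0 \<le> s" "\<sigma> \<in> {s..t}" "t \<le> T" for s t \<sigma>
  proof -
    have increment: "norm (x \<sigma> $ j - x s $ j) \<le> L * B * (\<sigma> - s)" for j
      using is_traj_linear_increment_le[OF traj bounded_linear_vec_nth, where s=s and t=\<sigma> and C="L * B"]
        rhs_bound that by auto
    have "L * B * (\<sigma> - s) \<le> L * B * (t - s)"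
      using that(2) \<open>0 \<le> L * B\<close> by (intro mult_left_mono) auto
    then have "norm (x \<sigma> $ j - x s $ j) \<le> L * B * (t - s)" for j
      using increment[of j] by linarith
    then show ?thesis
      by (simp add: block_cball_def)
  qed
  then show thesis
    by (rule that)
qed

lemma is_traj_block_cball_invariant:
  fixes F :: "real \<Rightarrow> 'v::euclidean_space^'n \<Rightarrow> 'v^'n"
  assumes traj: "is_traj F t0 x" and stays: "\<And>t. t0 \<le> t \<Longrightarrow> x t \<in> P"
    and euler: "\<And>\<tau> v h \<rho>. t0 \<le> \<tau> \<Longrightarrow> v \<in> P \<inter> block_cball c \<rho> \<Longrightarrow> 0 \<le> h \<Longrightarrow> h \<le> \<delta> \<Longrightarrow>
        v + h *\<^sub>R F \<tau> v \<in> block_cball c \<rho>"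
    and lipschitz: "\<And>\<tau> v w \<mu>. t0 \<le> \<tau> \<Longrightarrow> v - w \<in> block_cball 0 \<mu> \<Longrightarrow>
        F \<tau> v - F \<tau> w \<in> block_cball 0 (L * \<mu>)"
    and equilibrium: "\<And>\<tau>. t0 \<le> \<tau> \<Longrightarrow> F \<tau> (\<chi> j. c) = 0"
    and "0 < \<delta>" and init: "x t0 \<in> block_cball c r" and "t0 \<le> T"
  shows "x T \<in> block_cball c r"
proof -
  obtain C where drift: "\<And>s t \<sigma>. t0 \<le> s \<Longrightarrow> \<sigma> \<in> {s..t} \<Longrightarrow> t \<le> T \<Longrightarrow>
      x \<sigma> - x s \<in> block_cball 0 (C * (t - s))"
    using is_traj_block_lipschitz_in_time[OF traj lipschitz equilibrium \<open>t0 \<le> T\<close>] by blast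
  define \<phi> where "\<phi> t = (MAX j. norm (x t $ j - c))" for t
  have "\<phi> t \<le> \<phi> s + L * C * (t - s)\<^sup>2"
    if st: "t0 \<le> s" "s \<le> t" "t \<le> T" "t - s \<le> \<delta>" for s t
  proof -
    have "x s \<in> block_cball c (\<phi> s)"
      by (simp add: \<phi>_def in_block_cball_iff_Max_le)
    with st drift[OF st(1) _ st(3)]
    have "x t \<in> block_cball c (\<phi> s + L * C * (t - s)\<^sup>2)"
      by (intro is_traj_block_cball_step[OF traj stays euler lipschitz]) auto
    then show ?thesis
      by (simp add: \<phi>_def in_block_cball_iff_Max_le)
  qed
  then have "\<phi> T \<le> \<phi> t0"
    using \<open>0 < \<delta>\<close> \<open>t0 \<le> T\<close> by (rule le_of_quadratic_increments)
  then show ?thesis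
    using init unfolding in_block_cball_iff_Max_le \<phi>_def by linarith
qed

lemma pos_invariant_Int_block_cball:
  fixes F :: "real \<Rightarrow> 'v::euclidean_space^'n \<Rightarrow> 'v^'n"
  assumes P: "pos_invariant F P"
    and euler: "\<And>\<tau> v h \<rho>. 0 \<le> \<tau> \<Longrightarrow> v \<in> P \<inter> block_cball c \<rho> \<Longrightarrow> 0 \<le> h \<Longrightarrow> h \<le> \<delta> \<Longrightarrow>
        v + h *\<^sub>R F \<tau> v \<in> block_cball c \<rho>"
    and lipschitz: "\<And>\<tau> v w \<mu>. 0 \<le> \<tau> \<Longrightarrow> v - w \<in> block_cball 0 \<mu> \<Longrightarrow>
        F \<tau> v - F \<tau> w \<in> block_cball 0 (L * \<mu>)"
    and equilibrium: "\<And>\<tau>. 0 \<le> \<tau> \<Longrightarrow> F \<tau> (\<chi> j. c) = 0"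
    and "0 < \<delta>"
  shows "pos_invariant F (P \<inter> block_cball c r)"
  unfolding pos_invariant_def
proof (intro allI impI)
  fix x t0 T
  assume t0: "0 \<le> t0" and traj: "is_traj F t0 x" and init: "x t0 \<in> P \<inter> block_cball c r"
    and "t0 \<le> T"
  have stays: "x t \<in> P" if "t0 \<le> t" for t
    using P t0 traj init that unfolding pos_invariant_def by blast
  have "x T \<in> block_cball c r"
  proof (rule is_traj_block_cball_invariant[OF traj stays])
    show "v + h *\<^sub>R F \<tau> v \<in> block_cball c \<rho>"
      if "t0 \<le> \<tau>" "v \<in> P \<inter> block_cball c \<rho>" "0 \<le> h" "h \<le> \<delta>" for \<tau> v h \<rho>
      using euler that t0 by simp
    show "F \<tau> v - F \<tau> w \<in> block_cball 0 (L * \<mu>)"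
      if "t0 \<le> \<tau>" "v - w \<in> block_cball 0 \<mu>" for \<tau> v w \<mu>
      using lipschitz that t0 by simp
    show "F \<tau> (\<chi> j. c) = 0" if "t0 \<le> \<tau>" for \<tau>
      using equilibrium that t0 by simp
  qed (use \<open>0 < \<delta>\<close> init \<open>t0 \<le> T\<close> in auto)
  with stays \<open>t0 \<le> T\<close> show "x T \<in> P \<inter> block_cball c r"
    by simp
qed

section \<open>Projections onto the hyperplanes\<close>

lemma projA_diff:
  "projA H z i y - projA H z i y' = (y - y') - (H $ i \<bullet> (y - y')) *\<^sub>R H $ i"
  unfolding projA_def by (simp add: algebra_simps)

lemma norm_minus_inner_scaleR_le:
  fixes b v :: "'a::real_inner"
  assumes "norm b = 1"
  shows "norm (v - (b \<bullet> v) *\<^sub>R b) \<le> norm v"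
proof -
  have "b \<bullet> b = 1"
    using assms by (simp add: norm_eq_1)
  then have "(v - (b \<bullet> v) *\<^sub>R b) \<bullet> (v - (b \<bullet> v) *\<^sub>R b) = v \<bullet> v - (b \<bullet> v)\<^sup>2"
    by (simp add: inner_diff_left inner_diff_right inner_commute power2_eq_square)
  then show ?thesis
    unfolding norm_le by simp
qed

lemma projA_nonexpansive:
  assumes "norm (H $ i) = 1"
  shows "norm (projA H z i y - projA H z i y') \<le> norm (y - y')"
  unfolding projA_diff using assms by (rule norm_minus_inner_scaleR_le)

lemma projA_in_affA: "norm (H $ i) = 1 \<Longrightarrow> projA H z i y \<in> affA H z i"
  unfolding projA_def affA_def by (simp add: inner_diff_right inner_add_right dot_square_norm)

lemma projA_eq_self: "y \<in> affA H z i \<Longrightarrow> projA H z i y = y"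
  unfolding projA_def affA_def by simp

lemma solution_in_affA: "H *v c = z \<Longrightarrow> c \<in> affA H z i"
  unfolding affA_def by (auto simp: matrix_vector_mul_component)

section \<open>The two flows\<close>

lemma sum_le_CARD_mult:
  fixes g :: "'n::finite \<Rightarrow> real"
  assumes "\<And>j. 0 \<le> g j" "\<And>j. g j \<le> A"
  shows "sum g S \<le> real CARD('n) * A"
proof -
  have "sum g S \<le> real (card S) * A"
    using sum_bounded_above[of S g A] assms(2) by simp
  also have "\<dots> \<le> real CARD('n) * A"
    using order_trans[OF assms] by (intro mult_right_mono) (auto intro: card_mono)
  finally show ?thesis .
qed

lemma norm_sum_scaleR_le:
  assumes "\<And>j. j \<in> S \<Longrightarrow> 0 \<le> \<beta> j" "\<And>j. j \<in> S \<Longrightarrow> norm (w j) \<le> \<rho>"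
  shows "norm (\<Sum>j\<in>S. \<beta> j *\<^sub>R w j) \<le> sum \<beta> S * \<rho>"
proof -
  have "norm (\<Sum>j\<in>S. \<beta> j *\<^sub>R w j) \<le> (\<Sum>j\<in>S. \<beta> j * \<rho>)"
    using assms by (intro norm_sum[THEN order_trans] sum_mono) (simp add: mult_left_mono)
  then show ?thesis
    by (simp add: sum_distrib_right)
qed

lemma sum_scaleR_diff_eq:
  fixes u :: "'i \<Rightarrow> 'a::real_vector"
  shows "(\<Sum>j\<in>S. \<beta> j *\<^sub>R (u j - y)) = (\<Sum>j\<in>S. \<beta> j *\<^sub>R u j) - sum \<beta> S *\<^sub>R y"
  by (simp add: scaleR_right_diff_distrib sum_subtractf scaleR_sum_left)

lemma norm_sum_scaleR_diff_le:
  assumes "\<And>j. j \<in> S \<Longrightarrow> 0 \<le> \<beta> j" "\<And>j. norm (d j) \<le> \<mu>"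
  shows "norm (\<Sum>j\<in>S. \<beta> j *\<^sub>R (d j - d i)) \<le> sum \<beta> S * (2 * \<mu>)"
proof (rule norm_sum_scaleR_le)
  show "norm (d j - d i) \<le> 2 * \<mu>" for j
    using norm_triangle_ineq4[of "d j" "d i"] assms(2)[of j] assms(2)[of i] by simp
qed (use assms in auto)

lemma step_weight_le_1:
  fixes h \<beta> B :: real
  assumes "0 \<le> h" "h \<le> 1 / (B + 1)" "0 \<le> \<beta>" "\<beta> \<le> B"
  shows "h * \<beta> + h \<le> 1"
proof -
  have "h * (\<beta> + 1) \<le> h * (B + 1)"
    using assms by (intro mult_left_mono) auto
  also have "\<dots> \<le> 1"
    using assms by (simp add: le_divide_eq)
  finally show ?thesis
    by (simp add: algebra_simps)
qed

lemma cp_rhs_nth_centered: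
  assumes "projA H z i c = c"
  shows "cp_rhs K E a H z \<tau> v $ i
    = K *\<^sub>R ((\<Sum>j\<in>nbrs E \<tau> i. a i j \<tau> *\<^sub>R (v $ j - c)) - (\<Sum>j\<in>nbrs E \<tau> i. a i j \<tau>) *\<^sub>R (v $ i - c))
      + (projA H z i (v $ i) - projA H z i c) - (v $ i - c)"
  unfolding cp_rhs_def vec_lambda_beta sum_scaleR_diff_eq using assms by (simp add: algebra_simps)

lemma pc_rhs_nth_centered:
  assumes "projA H z i c = c" "projA H z i (v $ i) = v $ i"
  shows "pc_rhs E a H z \<tau> v $ i
    = (\<Sum>j\<in>nbrs E \<tau> i. a i j \<tau> *\<^sub>R (projA H z i (v $ j) - projA H z i c))
      - (\<Sum>j\<in>nbrs E \<tau> i. a i j \<tau>) *\<^sub>R (v $ i - c)"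
  unfolding pc_rhs_def vec_lambda_beta sum_scaleR_diff_eq using assms by (simp add: algebra_simps)

lemma cp_rhs_diff_nth:
  "(cp_rhs K E a H z \<tau> v - cp_rhs K E a H z \<tau> w) $ i
    = K *\<^sub>R (\<Sum>j\<in>nbrs E \<tau> i. a i j \<tau> *\<^sub>R ((v $ j - w $ j) - (v $ i - w $ i)))
      + (projA H z i (v $ i) - projA H z i (w $ i)) - (v $ i - w $ i)"
proof -
  have "(\<Sum>j\<in>nbrs E \<tau> i. a i j \<tau> *\<^sub>R (v $ j - v $ i)) - (\<Sum>j\<in>nbrs E \<tau> i. a i j \<tau> *\<^sub>R (w $ j - w $ i))
      = (\<Sum>j\<in>nbrs E \<tau> i. a i j \<tau> *\<^sub>R ((v $ j - w $ j) - (v $ i - w $ i)))"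
    unfolding sum_subtractf[symmetric] by (intro sum.cong) (auto simp: algebra_simps)
  then show ?thesis
    unfolding cp_rhs_def vector_minus_component vec_lambda_beta
    by (simp add: algebra_simps flip: scaleR_diff_right)
qed

lemma pc_rhs_diff_nth:
  "(pc_rhs E a H z \<tau> v - pc_rhs E a H z \<tau> w) $ i
    = (\<Sum>j\<in>nbrs E \<tau> i. a i j \<tau> *\<^sub>R ((projA H z i (v $ j) - projA H z i (w $ j))
        - (projA H z i (v $ i) - projA H z i (w $ i))))"
  unfolding pc_rhs_def vector_minus_component vec_lambda_beta sum_subtractf[symmetric]
  by (intro sum.cong) (auto simp: algebra_simps)

lemma cp_rhs_euler_step:
  fixes H :: "real^'m^'n" and c :: "real^'m"
  assumes rows: "\<forall>i. norm (H $ i) = 1" and sol: "H *v c = z" and K: "0 \<le> K"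
    and weights: "\<forall>i j. 0 \<le> a i j \<tau> \<and> a i j \<tau> \<le> A"
    and h: "0 \<le> h" "h \<le> 1 / (K * A * real CARD('n) + 1)"
    and v: "v \<in> block_cball c \<rho>"
  shows "v + h *\<^sub>R cp_rhs K E a H z \<tau> v \<in> block_cball c \<rho>"
  unfolding block_cball_def
proof (intro CollectI allI)
  fix i
  define S where "S = nbrs E \<tau> i"
  define \<alpha> where "\<alpha> = (\<Sum>j\<in>S. a i j \<tau>)"
  have v_near: "norm (v $ j - c) \<le> \<rho>" for j
    using v by (simp add: block_cball_def)
  have \<alpha>: "0 \<le> \<alpha>" "\<alpha> \<le> real CARD('n) * A"
    unfolding \<alpha>_def using weights by (auto intro: sum_nonneg sum_le_CARD_mult)
  have "K * \<alpha> \<le> K * A * real CARD('n)"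
    using mult_left_mono[OF \<alpha>(2) K] by (simp add: ac_simps)
  then have "h * (K * \<alpha>) + h \<le> 1"
    using \<alpha>(1) K by (intro step_weight_le_1[OF h]) auto
  then have weight: "0 \<le> 1 - h - h * K * \<alpha>"
    by (simp add: algebra_simps)
  \<comment> \<open>the Euler step is a convex combination of vectors of norm at most \<open>\<rho>\<close>\<close>
  have "(v + h *\<^sub>R cp_rhs K E a H z \<tau> v) $ i - c
      = (1 - h - h * K * \<alpha>) *\<^sub>R (v $ i - c) + h *\<^sub>R (projA H z i (v $ i) - projA H z i c)
        + (h * K) *\<^sub>R (\<Sum>j\<in>S. a i j \<tau> *\<^sub>R (v $ j - c))"
    unfolding vector_add_component vector_scaleR_component
      cp_rhs_nth_centered[OF projA_eq_self[OF solution_in_affA[OF sol]]]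
      S_def[symmetric] \<alpha>_def[symmetric]
    by (simp add: algebra_simps)
  also have "norm \<dots> \<le> (1 - h - h * K * \<alpha>) * \<rho> + h * \<rho> + h * K * (\<alpha> * \<rho>)"
  proof (intro norm_triangle_le add_mono)
    show "norm ((1 - h - h * K * \<alpha>) *\<^sub>R (v $ i - c)) \<le> (1 - h - h * K * \<alpha>) * \<rho>"
      using weight v_near by (simp add: mult_left_mono)
    show "norm (h *\<^sub>R (projA H z i (v $ i) - projA H z i c)) \<le> h * \<rho>"
      using order_trans[OF projA_nonexpansive[of H i z] v_near] rows h(1) by (simp add: mult_left_mono)
    show "norm ((h * K) *\<^sub>R (\<Sum>j\<in>S. a i j \<tau> *\<^sub>R (v $ j - c))) \<le> h * K * (\<alpha> * \<rho>)"
      using norm_sum_scaleR_le[of S "\<lambda>j. a i j \<tau>" "\<lambda>j. v $ j - c" \<rho>] weights v_near h(1) K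
      by (simp add: \<alpha>_def mult_left_mono)
  qed
  also have "\<dots> = \<rho>"
    by (simp add: algebra_simps)
  finally show "norm ((v + h *\<^sub>R cp_rhs K E a H z \<tau> v) $ i - c) \<le> \<rho>" .
qed

lemma cp_rhs_lipschitz:
  fixes H :: "real^'m^'n"
  assumes rows: "\<forall>i. norm (H $ i) = 1" and K: "0 \<le> K"
    and weights: "\<forall>i j. 0 \<le> a i j \<tau> \<and> a i j \<tau> \<le> A"
    and vw: "v - w \<in> block_cball 0 \<mu>"
  shows "cp_rhs K E a H z \<tau> v - cp_rhs K E a H z \<tau> w
    \<in> block_cball 0 ((2 * K * A * real CARD('n) + 2) * \<mu>)"
  unfolding block_cball_def
proof (intro CollectI allI)
  fix i
  define S where "S = nbrs E \<tau> i"
  define d where "d j = v $ j - w $ j" for j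
  have d: "norm (d j) \<le> \<mu>" for j
    using vw by (simp add: block_cball_def d_def)
  have "norm ((cp_rhs K E a H z \<tau> v - cp_rhs K E a H z \<tau> w) $ i - 0)
      \<le> K * norm (\<Sum>j\<in>S. a i j \<tau> *\<^sub>R (d j - d i))
        + norm (projA H z i (v $ i) - projA H z i (w $ i)) + norm (d i)"
    unfolding diff_zero cp_rhs_diff_nth S_def[symmetric] d_def[symmetric]
    using norm_triangle_ineq4[of "K *\<^sub>R (\<Sum>j\<in>S. a i j \<tau> *\<^sub>R (d j - d i))
        + (projA H z i (v $ i) - projA H z i (w $ i))" "d i"]
      norm_triangle_ineq[of "K *\<^sub>R (\<Sum>j\<in>S. a i j \<tau> *\<^sub>R (d j - d i))"
        "projA H z i (v $ i) - projA H z i (w $ i)"] K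
    by simp
  also have "\<dots> \<le> K * (real CARD('n) * A * (2 * \<mu>)) + \<mu> + \<mu>"
  proof (intro add_mono mult_left_mono K)
    have "0 \<le> \<mu>"
      using d norm_ge_zero order_trans by blast
    then have "(\<Sum>j\<in>S. a i j \<tau>) * (2 * \<mu>) \<le> real CARD('n) * A * (2 * \<mu>)"
      using weights by (intro mult_right_mono sum_le_CARD_mult) auto
    then show "norm (\<Sum>j\<in>S. a i j \<tau> *\<^sub>R (d j - d i)) \<le> real CARD('n) * A * (2 * \<mu>)"
      using norm_sum_scaleR_diff_le[of S "\<lambda>j. a i j \<tau>" d \<mu> i] weights d by simp
    show "norm (projA H z i (v $ i) - projA H z i (w $ i)) \<le> \<mu>"
      using order_trans[OF projA_nonexpansive[of H i z] d[unfolded d_def]] rows by simp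
  qed (rule d)
  also have "\<dots> = (2 * K * A * real CARD('n) + 2) * \<mu>"
    by (simp add: algebra_simps)
  finally show "norm ((cp_rhs K E a H z \<tau> v - cp_rhs K E a H z \<tau> w) $ i - 0)
    \<le> (2 * K * A * real CARD('n) + 2) * \<mu>" .
qed

lemma pc_rhs_euler_step:
  fixes H :: "real^'m^'n" and c :: "real^'m"
  assumes rows: "\<forall>i. norm (H $ i) = 1" and sol: "H *v c = z"
    and weights: "\<forall>i j. 0 \<le> a i j \<tau> \<and> a i j \<tau> \<le> A"
    and h: "0 \<le> h" "h \<le> 1 / (A * real CARD('n) + 1)"
    and v: "v \<in> {v. \<forall>i. v $ i \<in> affA H z i} \<inter> block_cball c \<rho>"
  shows "v + h *\<^sub>R pc_rhs E a H z \<tau> v \<in> block_cball c \<rho>"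
  unfolding block_cball_def
proof (intro CollectI allI)
  fix i
  define S where "S = nbrs E \<tau> i"
  define q where "q j = projA H z i (v $ j) - projA H z i c" for j
  define \<alpha> where "\<alpha> = (\<Sum>j\<in>S. a i j \<tau>)"
  have v_near: "norm (v $ j - c) \<le> \<rho>" for j
    using v by (simp add: block_cball_def)
  have q: "norm (q j) \<le> \<rho>" for j
    unfolding q_def using order_trans[OF projA_nonexpansive[of H i z] v_near] rows by simp
  have \<alpha>: "0 \<le> \<alpha>" "\<alpha> \<le> real CARD('n) * A"
    unfolding \<alpha>_def using weights by (auto intro: sum_nonneg sum_le_CARD_mult)
  have "h * \<alpha> + h \<le> 1"
    using \<alpha> by (intro step_weight_le_1[OF h]) (simp_all add: mult.commute)
  then have weight: "0 \<le> 1 - h * \<alpha>"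
    using h(1) by simp
  have fixed: "projA H z i c = c" "projA H z i (v $ i) = v $ i"
    using projA_eq_self[OF solution_in_affA[OF sol]] projA_eq_self[of "v $ i" H z i] v by auto
  have "(v + h *\<^sub>R pc_rhs E a H z \<tau> v) $ i - c
      = (1 - h * \<alpha>) *\<^sub>R (v $ i - c) + h *\<^sub>R (\<Sum>j\<in>S. a i j \<tau> *\<^sub>R q j)"
    unfolding vector_add_component vector_scaleR_component pc_rhs_nth_centered[OF fixed]
      S_def[symmetric] \<alpha>_def[symmetric] q_def[symmetric]
    by (simp add: algebra_simps)
  also have "norm \<dots> \<le> (1 - h * \<alpha>) * \<rho> + h * (\<alpha> * \<rho>)"
  proof (intro norm_triangle_le add_mono)
    show "norm ((1 - h * \<alpha>) *\<^sub>R (v $ i - c)) \<le> (1 - h * \<alpha>) * \<rho>"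
      using weight v_near by (simp add: mult_left_mono)
    show "norm (h *\<^sub>R (\<Sum>j\<in>S. a i j \<tau> *\<^sub>R q j)) \<le> h * (\<alpha> * \<rho>)"
      using norm_sum_scaleR_le[of S "\<lambda>j. a i j \<tau>" q \<rho>] weights q h(1)
      by (simp add: \<alpha>_def mult_left_mono)
  qed
  also have "\<dots> = \<rho>"
    by (simp add: algebra_simps)
  finally show "norm ((v + h *\<^sub>R pc_rhs E a H z \<tau> v) $ i - c) \<le> \<rho>" .
qed

lemma pc_rhs_lipschitz:
  fixes H :: "real^'m^'n"
  assumes rows: "\<forall>i. norm (H $ i) = 1"
    and weights: "\<forall>i j. 0 \<le> a i j \<tau> \<and> a i j \<tau> \<le> A"
    and vw: "v - w \<in> block_cball 0 \<mu>"
  shows "pc_rhs E a H z \<tau> v - pc_rhs E a H z \<tau> w \<in> block_cball 0 (2 * A * real CARD('n) * \<mu>)"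
  unfolding block_cball_def
proof (intro CollectI allI)
  fix i
  define p where "p j = projA H z i (v $ j) - projA H z i (w $ j)" for j
  have p: "norm (p j) \<le> \<mu>" for j
    using order_trans[OF projA_nonexpansive[of H i z "v $ j" "w $ j"]] rows vw
    by (simp add: block_cball_def p_def)
  have "0 \<le> \<mu>"
    using p norm_ge_zero order_trans by blast
  have "norm ((pc_rhs E a H z \<tau> v - pc_rhs E a H z \<tau> w) $ i - 0)
      = norm (\<Sum>j\<in>nbrs E \<tau> i. a i j \<tau> *\<^sub>R (p j - p i))"
    unfolding diff_zero pc_rhs_diff_nth p_def ..
  also have "\<dots> \<le> (\<Sum>j\<in>nbrs E \<tau> i. a i j \<tau>) * (2 * \<mu>)"
    using weights p by (intro norm_sum_scaleR_diff_le) auto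
  also have "\<dots> \<le> real CARD('n) * A * (2 * \<mu>)"
    using weights \<open>0 \<le> \<mu>\<close> by (intro mult_right_mono sum_le_CARD_mult) auto
  finally show "norm ((pc_rhs E a H z \<tau> v - pc_rhs E a H z \<tau> w) $ i - 0)
    \<le> 2 * A * real CARD('n) * \<mu>"
    by (simp add: algebra_simps)
qed

lemma pc_rhs_orthogonal_row:
  "norm (H $ i) = 1 \<Longrightarrow> H $ i \<bullet> pc_rhs E a H z \<tau> v $ i = 0"
  unfolding pc_rhs_def using projA_in_affA[of H i z]
  by (simp add: inner_sum_right inner_diff_right affA_def)

lemma cp_rhs_solution_eq_0:
  assumes "H *v c = z"
  shows "cp_rhs K E a H z \<tau> (\<chi> j. c) = 0"
  unfolding cp_rhs_def by (simp add: projA_eq_self[OF solution_in_affA[OF assms]] vec_eq_iff)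

lemma pc_rhs_const_eq_0: "pc_rhs E a H z \<tau> (\<chi> j. c) = 0"
  unfolding pc_rhs_def by (simp add: vec_eq_iff)

lemma pos_invariant_pc_rhs_affA:
  assumes rows: "\<forall>i. norm (H $ i) = 1"
  shows "pos_invariant (pc_rhs E a H z) {x. \<forall>i. x $ i \<in> affA H z i}"
  unfolding pos_invariant_def
proof (intro allI impI CollectI)
  fix x t0 t i
  assume traj: "is_traj (pc_rhs E a H z) t0 x" and init: "x t0 \<in> {x. \<forall>i. x $ i \<in> affA H z i}"
    and "t0 \<le> t"
  have "bounded_linear (\<lambda>v. H $ i \<bullet> v $ i)"
    using bounded_linear_compose[OF bounded_linear_inner_right bounded_linear_vec_nth] .
  then have "norm (H $ i \<bullet> x t $ i - H $ i \<bullet> x t0 $ i) \<le> 0 * (t - t0)"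
    by (rule is_traj_linear_increment_le[OF traj _ order_refl \<open>t0 \<le> t\<close>])
      (simp add: pc_rhs_orthogonal_row rows)
  with init show "x t $ i \<in> affA H z i"
    by (simp add: affA_def)
qed

lemma pos_invariant_cp_rhs_block_cball:
  fixes H :: "real^'m^'n" and c :: "real^'m"
  assumes rows: "\<forall>i. norm (H $ i) = 1" and sol: "H *v c = z" and K: "0 \<le> K"
    and weights: "\<And>\<tau>. 0 \<le> \<tau> \<Longrightarrow> \<forall>i j. 0 \<le> a i j \<tau> \<and> a i j \<tau> \<le> A"
  shows "pos_invariant (cp_rhs K E a H z) (block_cball c r)"
proof -
  have "0 \<le> A"
    using weights[of 0] order_trans by blast
  have "pos_invariant (cp_rhs K E a H z) (UNIV \<inter> block_cball c r)"
  proof (rule pos_invariant_Int_block_cball)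
    show "pos_invariant (cp_rhs K E a H z) UNIV"
      by (simp add: pos_invariant_def)
    show "v + h *\<^sub>R cp_rhs K E a H z \<tau> v \<in> block_cball c \<rho>"
      if "0 \<le> \<tau>" "v \<in> UNIV \<inter> block_cball c \<rho>" "0 \<le> h" "h \<le> 1 / (K * A * real CARD('n) + 1)"
      for \<tau> v h \<rho>
      using that weights[OF that(1)] by (intro cp_rhs_euler_step[OF rows sol K]) auto
    show "cp_rhs K E a H z \<tau> v - cp_rhs K E a H z \<tau> w
        \<in> block_cball 0 ((2 * K * A * real CARD('n) + 2) * \<mu>)"
      if "0 \<le> \<tau>" "v - w \<in> block_cball 0 \<mu>" for \<tau> v w \<mu>
      using that weights[OF that(1)] by (intro cp_rhs_lipschitz[OF rows K])
    show "cp_rhs K E a H z \<tau> (\<chi> j. c) = 0" for \<tau>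
      using sol by (rule cp_rhs_solution_eq_0)
    show "0 < 1 / (K * A * real CARD('n) + 1)"
      using K \<open>0 \<le> A\<close> by (intro divide_pos_pos add_nonneg_pos mult_nonneg_nonneg) auto
  qed
  then show ?thesis
    by simp
qed

lemma pos_invariant_pc_rhs_block_cball:
  fixes H :: "real^'m^'n" and c :: "real^'m"
  assumes rows: "\<forall>i. norm (H $ i) = 1" and sol: "H *v c = z"
    and weights: "\<And>\<tau>. 0 \<le> \<tau> \<Longrightarrow> \<forall>i j. 0 \<le> a i j \<tau> \<and> a i j \<tau> \<le> A"
  shows "pos_invariant (pc_rhs E a H z) ({x. \<forall>i. x $ i \<in> affA H z i} \<inter> block_cball c r)"
proof (rule pos_invariant_Int_block_cball)
  have "0 \<le> A"
    using weights[of 0] order_trans by blast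
  then show "0 < 1 / (A * real CARD('n) + 1)"
    by (intro divide_pos_pos add_nonneg_pos mult_nonneg_nonneg) auto
  show "pos_invariant (pc_rhs E a H z) {x. \<forall>i. x $ i \<in> affA H z i}"
    using rows by (rule pos_invariant_pc_rhs_affA)
  show "v + h *\<^sub>R pc_rhs E a H z \<tau> v \<in> block_cball c \<rho>"
    if "0 \<le> \<tau>" "v \<in> {x. \<forall>i. x $ i \<in> affA H z i} \<inter> block_cball c \<rho>" "0 \<le> h"
      "h \<le> 1 / (A * real CARD('n) + 1)"
    for \<tau> v h \<rho>
    using that weights[OF that(1)] by (intro pc_rhs_euler_step[OF rows sol])
  show "pc_rhs E a H z \<tau> v - pc_rhs E a H z \<tau> w \<in> block_cball 0 (2 * A * real CARD('n) * \<mu>)"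
    if "0 \<le> \<tau>" "v - w \<in> block_cball 0 \<mu>" for \<tau> v w \<mu>
    using that weights[OF that(1)] by (intro pc_rhs_lipschitz[OF rows])
  show "pc_rhs E a H z \<tau> (\<chi> j. c) = 0" for \<tau>
    by (rule pc_rhs_const_eq_0)
qed

theorem lemma6:
  fixes H :: "real^'m^'n" and z :: "real^'n" and ysharp :: "real^'m" and r K :: real
    and E :: "real \<Rightarrow> ('n \<times> 'n) set" and a :: "'n \<Rightarrow> 'n \<Rightarrow> real \<Rightarrow> real"
  assumes rows: "\<forall>i. norm (H $ i) = 1"
    and cases: "(rank H = CARD('m) \<and> z \<in> range (\<lambda>y. H *v y)) \<or>
                (rank H < CARD('m) \<and> z \<in> range (\<lambda>y. H *v y))"
    and sol: "H *v ysharp = z"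
    and r: "r > 0"
    and W: "weights_ok a"
    and K: "K > 0"
  shows "pos_invariant (cp_rhs K E a H z) {x. \<forall>i. norm (x $ i - ysharp) \<le> r}
       \<and> pos_invariant (pc_rhs E a H z)
           ({x. \<forall>i. norm (x $ i - ysharp) \<le> r} \<inter> {x. \<forall>i. x $ i \<in> affA H z i})"
proof -
  obtain A where weights: "\<And>\<tau>. 0 \<le> \<tau> \<Longrightarrow> \<forall>i j. 0 \<le> a i j \<tau> \<and> a i j \<tau> \<le> A"
    using W unfolding weights_ok_def by (meson less_imp_le)
  have ball: "{x. \<forall>i. norm (x $ i - ysharp) \<le> r} = block_cball ysharp r"
    by (simp add: block_cball_def)
  show ?thesis
    unfolding ball
    using pos_invariant_cp_rhs_block_cball[OF rows sol _ weights] K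
      pos_invariant_pc_rhs_block_cball[OF rows sol weights]
    by (simp add: Int_commute)
qed

end
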